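(* Let $E$ be a topological space with (Krull) dimension $\dim E<\infty$. (i) If $\Gamma(x_0,x_n)$ is a presentation for the length of $E$, then $x_0$ is initial in $E$ and $x_n$ is final in $E$. (ii) If $E$ has the $(UIP)$-property, then $l(E)=\dim E$.
   Context: For $x,y$ in a topological space $E$, write $x\rightarrow y$ if $y\in\overline{\{x\}}$, and $x\leftrightarrow y$ if both $x\rightarrow y$ and $y\rightarrow x$. A point $x$ is initial in $E$ if $x\leftrightarrow z$ for every $z\in E$ with $z\rightarrow x$, and final in $E$ if $x\leftrightarrow z$ for every $z\in E$ with $x\rightarrow z$. For $x\rightarrow y$ in $E$, a restrict series of specializations $\Gamma(x,y)$ from $x$ to $y$ is a chain $x=x_0\rightarrow x_1\rightarrow\cdots\rightarrow x_n=y$ in $E$ such that: if $y\rightarrow x$ then $y=x$ (and the chain is trivial); if $y\not\rightarrow x$, then for each $i=0,\dots,n-1$, $x_{i+1}\not\rightarrow x_i$ (i.e. $x_i$ is not a specialization of $x_{i+1}$). Its length is $n$. The length $l(x,y)$ is the supremum of lengths of restrict series from $x$ to $y$, and $l(E)=\sup\{l(x,y): x,y\in E,\ x\rightarrow y\}$. A restrict series in $E$ is a presentation for the length of $E$ if its length equals $l(E)$. $\dim E$ is the supremum of the lengths $n$ of chains $F_0\supsetneq F_1\supsetneq\cdots\supsetneq F_n$ of irreducible closed subsets of $E$. $E$ has the $(UIP)$-property if every irreducible closed subset $U$ of $E$ contains exactly one point $x_U$ initial in $U$ (subspace topology), and $x_U\neq x_V$ for distinct irreducible closed subsets $U\neq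 V$. *)

theory Defs
  imports "HOL-Analysis.Analysis" "HOL-Library.Extended_Nat"
begin

definition spec :: "'a topology \<Rightarrow> 'a \<Rightarrow> 'a \<Rightarrow> bool" where
  "spec X x y \<longleftrightarrow> x \<in> topspace X \<and> y \<in> X closure_of {x}"

definition initial_pt :: "'a topology \<Rightarrow> 'a \<Rightarrow> bool" where
  "initial_pt X x \<longleftrightarrow> x \<in> topspace X \<and>
     (\<forall>z \<in> topspace X. spec X z x \<longrightarrow> (spec X x z \<and> spec X z x))"

definition final_pt :: "'a topology \<Rightarrow> 'a \<Rightarrow> bool" where
  "final_pt X x \<longleftrightarrow> x \<in> topspace X \<and>
     (\<forall>z \<in> topspace X. spec X x z \<longrightarrow> (spec X x z \<and> spec X z x))"

definition restrict_series :: "'a topology \<Rightarrow> 'a list \<Rightarrow> bool" where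
  "restrict_series X xs \<longleftrightarrow> xs \<noteq> [] \<and>
     (\<forall>i < length xs - 1. spec X (xs ! i) (xs ! Suc i)) \<and>
     spec X (hd xs) (last xs) \<and>
     (spec X (last xs) (hd xs) \<longrightarrow> last xs = hd xs \<and> length xs = 1) \<and>
     (\<not> spec X (last xs) (hd xs) \<longrightarrow>
        (\<forall>i < length xs - 1. \<not> spec X (xs ! Suc i) (xs ! i)))"

definition series_len :: "'a list \<Rightarrow> enat" where
  "series_len xs = enat (length xs - 1)"

definition pt_length :: "'a topology \<Rightarrow> 'a \<Rightarrow> 'a \<Rightarrow> enat" where
  "pt_length X x y = Sup {series_len xs | xs. restrict_series X xs \<and> hd xs = x \<and> last xs = y}"

definition space_length :: "'a topology \<Rightarrow> enat" where
  "space_length X = Sup {pt_length X x y | x y. x \<in> topspace X \<and> y \<in> topspace X \<and> spec X x y}"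

definition presentation :: "'a topology \<Rightarrow> 'a list \<Rightarrow> bool" where
  "presentation X xs \<longleftrightarrow> restrict_series X xs \<and> series_len xs = space_length X"

definition irreducible_in :: "'a topology \<Rightarrow> 'a set \<Rightarrow> bool" where
  "irreducible_in X S \<longleftrightarrow> S \<noteq> {} \<and> S \<subseteq> topspace X \<and>
     (\<forall>C1 C2. closedin X C1 \<and> closedin X C2 \<and> S \<subseteq> C1 \<union> C2 \<longrightarrow> S \<subseteq> C1 \<or> S \<subseteq> C2)"

definition irr_closed :: "'a topology \<Rightarrow> 'a set \<Rightarrow> bool" where
  "irr_closed X S \<longleftrightarrow> closedin X S \<and> irreducible_in X S"

definition krull_dim :: "'a topology \<Rightarrow> enat" where
  "krull_dim X = Sup {enat n | n. \<exists>F :: nat \<Rightarrow> 'a set.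
      (\<forall>i \<le> n. irr_closed X (F i)) \<and> (\<forall>i < n. F (Suc i) \<subset> F i)}"

definition UIP :: "'a topology \<Rightarrow> bool" where
  "UIP X \<longleftrightarrow>
     (\<forall>U. irr_closed X U \<longrightarrow> (\<exists>!x. x \<in> U \<and> initial_pt (subtopology X U) x)) \<and>
     (\<forall>U V. irr_closed X U \<and> irr_closed X V \<and> U \<noteq> V \<longrightarrow>
        (THE x. x \<in> U \<and> initial_pt (subtopology X U) x) \<noteq>
        (THE x. x \<in> V \<and> initial_pt (subtopology X V) x))"

end

theory Submission
  imports Defs
begin

(* A restrict series is the same as a nonempty chain that descends strictly in the
   specialization preorder, i.e. along which the closures of the points shrink strictly.
   (i) A presentation cannot be extended by a point at either end, so nothing strictly
   specializes to its first point and its last point strictly specializes to nothing.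
   (ii) The closures of the points of a restrict series form a chain of irreducible closed
   sets, so l(E) <= dim E in any space. Under (UIP) every irreducible closed set U is the
   closure of its initial point x, because x is also the initial point of the irreducible
   closed set closure {x} and distinct such sets have distinct initial points. Hence every
   chain of irreducible closed sets comes from a restrict series of generic points. *)

lemma spec_iff_closure_of_subset:
  "spec X x y \<longleftrightarrow> x \<in> topspace X \<and> y \<in> topspace X \<and> X closure_of {y} \<subseteq> X closure_of {x}"
proof
  assume "spec X x y"
  then have "x \<in> topspace X" "y \<in> X closure_of {x}" by (auto simp: spec_def)
  then show "x \<in> topspace X \<and> y \<in> topspace X \<and> X closure_of {y} \<subseteq> X closure_of {x}"
    by (auto simp: in_closure_of intro: closure_of_minimal)
next
  assume "x \<in> topspace X \<and> y \<in> topspace X \<and> X closure_of {y} \<subseteq> X closure_of {x}"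
  then show "spec X x y" using closure_of_subset[of "{y}" X] by (auto simp: spec_def)
qed

lemma spec_trans: "spec X x y \<Longrightarrow> spec X y z \<Longrightarrow> spec X x z"
  unfolding spec_iff_closure_of_subset by blast

lemma spec_refl: "x \<in> topspace X \<Longrightarrow> spec X x x"
  unfolding spec_iff_closure_of_subset by blast

lemma spec_topspace:
  assumes "spec X x y"
  shows "x \<in> topspace X" "y \<in> topspace X"
  using assms unfolding spec_iff_closure_of_subset by blast+

definition strict_spec :: "'a topology \<Rightarrow> 'a \<Rightarrow> 'a \<Rightarrow> bool" where
  "strict_spec X x y \<longleftrightarrow> spec X x y \<and> \<not> spec X y x"

lemma strict_spec_iff_closure_of_psubset:
  "strict_spec X x y \<longleftrightarrow> x \<in> topspace X \<and> y \<in> topspace X \<and> X closure_of {y} \<subset> X closure_of {x}"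
  unfolding strict_spec_def spec_iff_closure_of_subset by blast

lemma transp_strict_spec: "transp (strict_spec X)"
  unfolding transp_def strict_spec_def by (meson spec_trans)

lemma sorted_wrt_strict_spec_iff:
  "sorted_wrt (strict_spec X) xs \<longleftrightarrow> successively (strict_spec X) xs"
  by (simp add: successively_conv_sorted_wrt[OF transp_strict_spec])

lemma restrict_series_iff:
  "restrict_series X xs \<longleftrightarrow> xs \<noteq> [] \<and> hd xs \<in> topspace X \<and> successively (strict_spec X) xs"
proof
  assume rs: "restrict_series X xs"
  then have "xs \<noteq> []" and "hd xs \<in> topspace X"
    by (auto simp: restrict_series_def dest: spec_topspace)
  moreover have "successively (strict_spec X) xs"
  proof (cases "length xs = 1")
    case True
    then show ?thesis by (cases xs) auto
  next
    case False
    then have "\<not> spec X (last xs) (hd xs)" using rs by (auto simp: restrict_series_def)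
    then show ?thesis
      using rs by (auto simp: restrict_series_def strict_spec_def successively_conv_nth)
  qed
  ultimately show "xs \<noteq> [] \<and> hd xs \<in> topspace X \<and> successively (strict_spec X) xs" by blast
next
  assume "xs \<noteq> [] \<and> hd xs \<in> topspace X \<and> successively (strict_spec X) xs"
  then obtain x ys where xs: "xs = x # ys" and x: "x \<in> topspace X"
    and sorted: "sorted_wrt (strict_spec X) xs" and succ: "successively (strict_spec X) xs"
    by (metis list.collapse sorted_wrt_strict_spec_iff)
  show "restrict_series X xs"
  proof (cases ys)
    case Nil
    then show ?thesis using xs x by (simp add: restrict_series_def spec_refl)
  next
    case (Cons y zs)
    then have "strict_spec X (hd xs) (last xs)" using sorted xs by simp
    then show ?thesis using succ xs Cons
      by (simp add: restrict_series_def strict_spec_def successively_conv_nth)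
  qed
qed

lemma restrict_series_Cons:
  assumes "restrict_series X xs" "strict_spec X x (hd xs)"
  shows "restrict_series X (x # xs)"
  using assms by (auto simp: restrict_series_iff successively_Cons strict_spec_def dest: spec_topspace)

lemma restrict_series_snoc:
  assumes "restrict_series X xs" "strict_spec X (last xs) x"
  shows "restrict_series X (xs @ [x])"
  using assms by (auto simp: restrict_series_iff successively_append_iff)

lemma restrict_series_subset_topspace:
  assumes "restrict_series X xs"
  shows "set xs \<subseteq> topspace X"
proof -
  obtain x ys where xs: "xs = x # ys" and x: "x \<in> topspace X"
    and "sorted_wrt (strict_spec X) xs"
    using assms by (metis list.collapse restrict_series_iff sorted_wrt_strict_spec_iff)
  then have "\<forall>y \<in> set ys. spec X x y" by (simp add: strict_spec_def)
  then show ?thesis using xs x by (auto dest: spec_topspace)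
qed

lemma series_len_le_space_length:
  assumes "restrict_series X xs"
  shows "series_len xs \<le> space_length X"
proof -
  have hd_last: "spec X (hd xs) (last xs)" using assms by (simp add: restrict_series_def)
  have "series_len xs \<le> pt_length X (hd xs) (last xs)"
    unfolding pt_length_def by (rule Sup_upper) (use assms in blast)
  also have "\<dots> \<le> space_length X"
    unfolding space_length_def by (rule Sup_upper) (use hd_last spec_topspace[OF hd_last] in blast)
  finally show ?thesis .
qed

lemma presentation_longest:
  assumes "presentation X xs" "restrict_series X ys"
  shows "length ys \<le> length xs"
proof -
  have "series_len ys \<le> series_len xs"
    using assms series_len_le_space_length by (simp add: presentation_def)
  moreover have "xs \<noteq> []" "ys \<noteq> []"
    using assms by (auto simp: presentation_def restrict_series_def)
  ultimately show ?thesis by (cases xs; cases ys) (auto simp: series_len_def)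
qed

lemma presentation_initial_pt:
  assumes "presentation X xs"
  shows "initial_pt X (hd xs)"
proof -
  have rs: "restrict_series X xs" using assms by (simp add: presentation_def)
  have "spec X (hd xs) z" if "spec X z (hd xs)" for z
  proof (rule ccontr)
    assume "\<not> spec X (hd xs) z"
    then have "restrict_series X (z # xs)"
      using restrict_series_Cons[OF rs] that by (simp add: strict_spec_def)
    then show False using presentation_longest[OF assms] by fastforce
  qed
  then show ?thesis using rs by (auto simp: initial_pt_def restrict_series_iff)
qed

lemma presentation_final_pt:
  assumes "presentation X xs"
  shows "final_pt X (last xs)"
proof -
  have rs: "restrict_series X xs" using assms by (simp add: presentation_def)
  have "spec X z (last xs)" if "spec X (last xs) z" for z
  proof (rule ccontr)
    assume "\<not> spec X z (last xs)"
    then have "restrict_series X (xs @ [z])"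
      using restrict_series_snoc[OF rs] that by (simp add: strict_spec_def)
    then show False using presentation_longest[OF assms] by fastforce
  qed
  moreover have "last xs \<in> topspace X"
    using restrict_series_subset_topspace[OF rs] rs by (auto simp: restrict_series_iff)
  ultimately show ?thesis by (auto simp: final_pt_def)
qed

lemma irr_closed_closure_of_singleton:
  assumes "x \<in> topspace X"
  shows "irr_closed X (X closure_of {x})"
proof -
  have x: "x \<in> X closure_of {x}" using closure_of_subset[of "{x}" X] assms by blast
  have "X closure_of {x} \<subseteq> C1 \<or> X closure_of {x} \<subseteq> C2"
    if "closedin X C1" "closedin X C2" "X closure_of {x} \<subseteq> C1 \<union> C2" for C1 C2
    using that x closure_of_minimal[of "{x}" C1 X] closure_of_minimal[of "{x}" C2 X] by blast
  then show ?thesis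
    using x closure_of_subset_topspace[of X "{x}"] by (auto simp: irr_closed_def irreducible_in_def)
qed

lemma chain_length_le_krull_dim:
  assumes "\<forall>i \<le> n. irr_closed X (F i)" "\<forall>i < n. F (Suc i) \<subset> F i"
  shows "enat n \<le> krull_dim X"
  unfolding krull_dim_def by (rule Sup_upper) (use assms in blast)

lemma series_len_le_krull_dim:
  assumes "restrict_series X xs"
  shows "series_len xs \<le> krull_dim X"
proof -
  define F where "F i = X closure_of {xs ! i}" for i
  have "xs \<noteq> []" using assms by (simp add: restrict_series_iff)
  then have "xs ! i \<in> topspace X" if "i \<le> length xs - 1" for i
  proof -
    have "i < length xs" using that \<open>xs \<noteq> []\<close> by (cases xs) auto
    then show ?thesis using restrict_series_subset_topspace[OF assms] nth_mem by blast
  qed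
  then have "\<forall>i \<le> length xs - 1. irr_closed X (F i)"
    by (simp add: F_def irr_closed_closure_of_singleton)
  moreover have "\<forall>i < length xs - 1. F (Suc i) \<subset> F i"
    using assms by (auto simp: F_def restrict_series_iff successively_conv_nth
        strict_spec_iff_closure_of_psubset)
  ultimately show ?thesis
    unfolding series_len_def by (rule chain_length_le_krull_dim)
qed

lemma space_length_le_krull_dim: "space_length X \<le> krull_dim X"
  unfolding space_length_def pt_length_def
  by (auto intro!: Sup_least series_len_le_krull_dim)

lemma spec_subtopology_iff:
  assumes "closedin X U" "x \<in> U"
  shows "spec (subtopology X U) x y \<longleftrightarrow> spec X x y"
proof -
  have "X closure_of {x} \<subseteq> U" using assms by (intro closure_of_minimal) auto
  then show ?thesis
    using assms closedin_subset by (auto simp: spec_def closure_of_subtopology)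
qed

lemma initial_pt_closure_of_singleton:
  assumes "x \<in> topspace X"
  shows "initial_pt (subtopology X (X closure_of {x})) x"
proof -
  let ?U = "X closure_of {x}"
  have x: "x \<in> ?U" using closure_of_subset[of "{x}" X] assms by blast
  have "spec X x z" if "z \<in> ?U" for z using that assms by (simp add: spec_def)
  then show ?thesis
    using x assms spec_subtopology_iff[of X ?U] by (auto simp: initial_pt_def)
qed

lemma UIP_generic_point:
  assumes "UIP X" "irr_closed X U"
  obtains x where "x \<in> topspace X" "X closure_of {x} = U"
proof -
  let ?initial = "\<lambda>V x. x \<in> V \<and> initial_pt (subtopology X V) x"
  have ex1: "\<exists>!x. ?initial V x" if "irr_closed X V" for V
    using assms(1) that by (simp add: UIP_def)
  define x where "x = (THE x. ?initial U x)"
  have "?initial U x" unfolding x_def by (rule theI'[OF ex1[OF assms(2)]])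
  then have x: "x \<in> topspace X"
    using assms(2) closedin_subset by (auto simp: irr_closed_def)
  have irr: "irr_closed X (X closure_of {x})" by (rule irr_closed_closure_of_singleton[OF x])
  have "(THE y. ?initial (X closure_of {x}) y) = x"
    using closure_of_subset[of "{x}" X] x initial_pt_closure_of_singleton[OF x]
    by (intro the1_equality[OF ex1[OF irr]]) auto
  then have "X closure_of {x} = U"
    using assms irr by (auto simp: UIP_def x_def)
  with x show ?thesis by (rule that)
qed

lemma krull_dim_le_space_length:
  assumes "UIP X"
  shows "krull_dim X \<le> space_length X"
  unfolding krull_dim_def
proof (rule Sup_least, clarify)
  fix n and F :: "nat \<Rightarrow> 'a set"
  assume irr: "\<forall>i \<le> n. irr_closed X (F i)" and strict: "\<forall>i < n. F (Suc i) \<subset> F i"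
  have "\<exists>x. x \<in> topspace X \<and> X closure_of {x} = F i" if "i \<le> n" for i
    using UIP_generic_point[OF assms] irr that by blast
  then obtain g where g: "\<And>i. i \<le> n \<Longrightarrow> g i \<in> topspace X \<and> X closure_of {g i} = F i"
    by metis
  define xs where "xs = map g [0..<Suc n]"
  have len: "length xs = Suc n" and nth: "\<And>i. i \<le> n \<Longrightarrow> xs ! i = g i"
    by (simp_all add: xs_def nth_map_upt del: upt_Suc)
  have "successively (strict_spec X) xs"
    using g strict by (simp add: successively_conv_nth len nth strict_spec_iff_closure_of_psubset)
  then have "restrict_series X xs"
    using g[of 0] nth[of 0] len by (cases xs) (auto simp: restrict_series_iff)
  then have "series_len xs \<le> space_length X" by (rule series_len_le_space_length)
  then show "enat n \<le> space_length X" by (simp add: series_len_def len)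
qed

theorem lemma2p1:
  fixes X :: "'a topology"
  assumes "krull_dim X < \<infinity>"
  shows "(\<forall>xs. presentation X xs \<longrightarrow> initial_pt X (hd xs) \<and> final_pt X (last xs))
         \<and> (UIP X \<longrightarrow> space_length X = krull_dim X)"
  using presentation_initial_pt presentation_final_pt
    antisym[OF space_length_le_krull_dim krull_dim_le_space_length] by blast

end
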